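(* Let $n=p'q$ where $p',q$ are distinct primes both at least $7$, let $A=L(n;p')$, and let $S=(x_1,x_2,x_3)$ be a sequence in $\mathbb{Z}_n$. Then $S$ is an $A$-extremal sequence for the Davenport constant if $S$ is equivalent with respect to $A$ to a sequence $(y_1,y_2,y_3)$ for which one of the following holds: (i) $y_1$ is the only term divisible by $q$, $y_1\neq 0$, and the image of $(y_2,y_3)$ under the natural map $g:\mathbb{Z}_n\to\mathbb{Z}_q$ is a $Q_q$-extremal sequence for the Davenport constant; (ii) $y_1$ is the only term coprime to $p'$, and the image of $(y_2,y_3)$ under $g$ is a $Q_q$-extremal sequence for the Davenport constant in $\mathbb{Z}_q$.
   Context: $\mathbb{Z}_m$ is the integers mod $m$, $U(m)$ its unit group; for a prime $q$, $Q_q=\{x^2: x\in U(q)\}$. For nonempty $A\subseteq\mathbb{Z}_m\setminus\{0\}$, a sequence $(x_1,\ldots,x_k)$ is an $A$-weighted zero-sum sequence if $\sum a_ix_i=0$ for some $a_i\in A$; $D_A(m)$ is the least $k$ such that every length-$k$ sequence in $\mathbb{Z}_m$ has a nonempty $A$-weighted zero-sum subsequence; an $A$-extremal sequence for the Davenport constant is a sequence of length $D_A(m)-1$ with no $A$-weighted zero-sum subsequence. For a multiplicative group $A$, $(x_1,\ldots,x_k)$ and $(y_1,\ldots,y_k)$ are equivalent with respect to $A$ if there are $a_i\in A$, a unit $c$ and a permutation $\sigma$ with $y_{\sigma(i)}=c\,a_ix_i$ for all $i$. For odd $m=\prod p_i^{r_i}$, prime $p\mid m$ and $a\in U(m)$,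 $\left(\frac{a}{p}\right)$ is the Legendre symbol of the image mod $p$, $\left(\frac{a}{m}\right)=\prod\left(\frac{a}{p_i}\right)^{r_i}$, and $L(m;p')=\{a\in U(m):\left(\frac{a}{m}\right)=\left(\frac{a}{p'}\right)\}$ for a prime $p'\mid m$. *)

theory Defs
  imports "HOL-Number_Theory.Number_Theory" "HOL-Combinatorics.Permutations"
begin

definition Zmod :: "int \<Rightarrow> int set" where
  "Zmod m = {0..<m}"

definition Umod :: "int \<Rightarrow> int set" where
  "Umod m = {a \<in> Zmod m. coprime a m}"

definition Qsq :: "int \<Rightarrow> int set" where
  "Qsq q = {(x ^ 2) mod q | x. x \<in> Umod q}"

definition has_wzs_subseq :: "int \<Rightarrow> int set \<Rightarrow> int list \<Rightarrow> bool" where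
  "has_wzs_subseq m A xs \<longleftrightarrow>
     (\<exists>I a. I \<subseteq> {..<length xs} \<and> I \<noteq> {} \<and> (\<forall>i\<in>I. a i \<in> A) \<and>
            (\<Sum>i\<in>I. a i * xs ! i) mod m = 0)"

definition Davenport :: "int \<Rightarrow> int set \<Rightarrow> nat" where
  "Davenport m A = (LEAST k. \<forall>xs. length xs = k \<and> set xs \<subseteq> Zmod m \<longrightarrow> has_wzs_subseq m A xs)"

definition extremal :: "int \<Rightarrow> int set \<Rightarrow> int list \<Rightarrow> bool" where
  "extremal m A xs \<longleftrightarrow> set xs \<subseteq> Zmod m \<and> length xs = Davenport m A - 1 \<and>
      \<not> has_wzs_subseq m A xs"

definition equiv_wrt :: "int \<Rightarrow> int set \<Rightarrow> int list \<Rightarrow> int list \<Rightarrow> bool" where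
  "equiv_wrt m A xs ys \<longleftrightarrow> length xs = length ys \<and>
     (\<exists>a c \<pi>. (\<forall>i<length xs. a i \<in> A) \<and> c \<in> Umod m \<and> (\<pi> permutes {..<length xs}) \<and>
        (\<forall>i<length xs. ys ! (\<pi> i) = (c * a i * xs ! i) mod m))"

definition Jac :: "int \<Rightarrow> int \<Rightarrow> int" where
  "Jac a m = (\<Prod>p\<in>prime_factors m. Legendre a p ^ multiplicity p m)"

definition Lset :: "int \<Rightarrow> int \<Rightarrow> int set" where
  "Lset m p' = {a \<in> Umod m. Jac a m = Legendre a p'}"

end

(*
  Write A = L(p q; p). Since Jac a (p q) = (a/p)(a/q), A consists of the units a with (a/q) = 1,
  so by the Chinese remainder theorem A is U(p) x Q_q. A Q_q-weighted zero-sum modulo q therefore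
  lifts to an A-weighted zero-sum modulo p q as soon as weights prime to p can be chosen that also
  make the sum vanish modulo p; for p > 2 this fails only when exactly one term of the relation is
  prime to p. The hypothesis gives D_{Q_q}(q) = 3, and r x + s y = 0 (mod q) with r, s in Q_q is
  solvable iff (-x y / q) = 1. From these two facts a case analysis on which terms are divisible by
  p or q produces a liftable relation in every 4-term sequence, so D_A(p q) <= 4. Conversely the
  sequence (y1, y2, y3) has no A-weighted zero-sum: modulo q any relation involving y2 or y3 would be
  a Q_q-relation of (y2, y3) (y1 vanishes mod q in case (i)); in case (ii) a relation involving y1
  fails modulo p, and y1 alone fails since y1 <> 0. Equivalent sequences share this property, so
  (x1, x2, x3) is A-extremal and D_A(p q) = 4.
*)
theory Submission
  imports Defs
begin

section \<open>Weighted zero-sum subsequences\<close>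

definition wzs_on :: "int \<Rightarrow> int set \<Rightarrow> int list \<Rightarrow> nat set \<Rightarrow> bool" where
  "wzs_on m A xs I \<longleftrightarrow> I \<subseteq> {..<length xs} \<and> I \<noteq> {} \<and>
     (\<exists>a. (\<forall>i\<in>I. a i \<in> A) \<and> m dvd (\<Sum>i\<in>I. a i * xs ! i))"

lemma has_wzs_subseq_iff_wzs_on: "has_wzs_subseq m A xs \<longleftrightarrow> (\<exists>I. wzs_on m A xs I)"
  by (auto simp: has_wzs_subseq_def wzs_on_def dvd_eq_mod_eq_0)

lemma wzs_on_finite: "wzs_on m A xs I \<Longrightarrow> finite I"
  unfolding wzs_on_def using finite_subset by blast

lemma wzs_on_reindex:
  assumes "wzs_on m A xs I" and "inj_on f I" and "f ` I \<subseteq> {..<length ys}"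
    and "\<And>i. i \<in> I \<Longrightarrow> [ys ! f i = xs ! i] (mod m)"
  shows "wzs_on m A ys (f ` I)"
proof -
  obtain a where a: "\<forall>i\<in>I. a i \<in> A" "m dvd (\<Sum>i\<in>I. a i * xs ! i)" and "I \<noteq> {}"
    using assms(1) by (auto simp: wzs_on_def)
  define b where "b = a \<circ> inv_into I f"
  have "(\<Sum>j\<in>f ` I. b j * ys ! j) = (\<Sum>i\<in>I. a i * ys ! f i)"
    using assms(2) by (simp add: sum.reindex b_def)
  also have "[\<dots> = (\<Sum>i\<in>I. a i * xs ! i)] (mod m)"
    using assms(4) by (intro cong_sum cong_mult cong_refl)
  finally have "m dvd (\<Sum>j\<in>f ` I. b j * ys ! j)"
    using a(2) cong_dvd_iff by blast
  moreover have "\<forall>j\<in>f ` I. b j \<in> A"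
    using a(1) assms(2) by (simp add: b_def)
  ultimately show ?thesis
    using assms(3) \<open>I \<noteq> {}\<close> unfolding wzs_on_def by blast
qed

lemma wzs_on_Un:
  assumes "wzs_on m A xs I" "wzs_on m A xs J" "I \<inter> J = {}"
  shows "wzs_on m A xs (I \<union> J)"
proof -
  obtain a b where a: "\<forall>i\<in>I. a i \<in> A" "m dvd (\<Sum>i\<in>I. a i * xs ! i)"
    and b: "\<forall>i\<in>J. b i \<in> A" "m dvd (\<Sum>i\<in>J. b i * xs ! i)"
    using assms(1,2) by (auto simp: wzs_on_def)
  define c where "c i = (if i \<in> I then a i else b i)" for i
  have "(\<Sum>i\<in>I \<union> J. c i * xs ! i) = (\<Sum>i\<in>I. c i * xs ! i) + (\<Sum>i\<in>J. c i * xs ! i)"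
    using assms by (intro sum.union_disjoint) (auto dest: wzs_on_finite)
  also have "\<dots> = (\<Sum>i\<in>I. a i * xs ! i) + (\<Sum>i\<in>J. b i * xs ! i)"
    using assms(3) by (auto simp: c_def intro!: sum.cong)
  finally have "m dvd (\<Sum>i\<in>I \<union> J. c i * xs ! i)"
    using a(2) b(2) by simp
  moreover have "\<forall>i\<in>I \<union> J. c i \<in> A"
    using a(1) b(1) by (auto simp: c_def)
  ultimately show ?thesis
    using assms(1,2) unfolding wzs_on_def by blast
qed

lemma wzs_on_subset:
  assumes "wzs_on m A xs I" "J \<subseteq> I" "J \<noteq> {}" "\<And>i. i \<in> I - J \<Longrightarrow> m dvd xs ! i"
  shows "wzs_on m A xs J"
proof -
  obtain a where a: "\<forall>i\<in>I. a i \<in> A" "m dvd (\<Sum>i\<in>I. a i * xs ! i)"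
    using assms(1) by (auto simp: wzs_on_def)
  have "(\<Sum>i\<in>I. a i * xs ! i) = (\<Sum>i\<in>I - J. a i * xs ! i) + (\<Sum>i\<in>J. a i * xs ! i)"
    using assms(1,2) by (intro sum.subset_diff) (auto dest: wzs_on_finite)
  moreover have "m dvd (\<Sum>i\<in>I - J. a i * xs ! i)"
    using assms(4) by (intro dvd_sum) simp
  ultimately have "m dvd (\<Sum>i\<in>J. a i * xs ! i)"
    using a(2) by (simp add: dvd_add_right_iff)
  then show ?thesis
    using assms a(1) unfolding wzs_on_def by blast
qed

lemma wzs_on_change_modulus:
  assumes "wzs_on m A xs I" "m' dvd m" "\<And>a. a \<in> A \<Longrightarrow> \<exists>b\<in>B. [b = a] (mod m')"
  shows "wzs_on m' B xs I"
proof -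
  obtain a where a: "\<forall>i\<in>I. a i \<in> A" "m dvd (\<Sum>i\<in>I. a i * xs ! i)"
    using assms(1) by (auto simp: wzs_on_def)
  have "\<forall>x\<in>A. \<exists>b. b \<in> B \<and> [b = x] (mod m')"
    using assms(3) by blast
  then obtain f where f: "\<forall>x\<in>A. f x \<in> B \<and> [f x = x] (mod m')"
    by (rule bchoice[THEN exE]) blast
  have "[(\<Sum>i\<in>I. f (a i) * xs ! i) = (\<Sum>i\<in>I. a i * xs ! i)] (mod m')"
    using a(1) f by (intro cong_sum cong_mult cong_refl) blast
  moreover have "m' dvd (\<Sum>i\<in>I. a i * xs ! i)"
    using a(2) assms(2) by (rule dvd_trans[rotated])
  ultimately have "m' dvd (\<Sum>i\<in>I. f (a i) * xs ! i)"
    using cong_dvd_iff by blast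
  then show ?thesis
    using assms(1) a(1) f unfolding wzs_on_def by (intro conjI exI[of _ "\<lambda>i. f (a i)"]) auto
qed

lemma wzs_on_singleton_dvd:
  assumes "wzs_on m A xs {i}" "\<And>a. a \<in> A \<Longrightarrow> coprime a m"
  shows "m dvd xs ! i"
proof -
  obtain a where a: "a \<in> A" "m dvd a * xs ! i"
    using assms(1) by (auto simp: wzs_on_def)
  moreover have "coprime m a"
    using assms(2)[OF a(1)] by (rule coprime_commute[THEN iffD1])
  ultimately show ?thesis
    by (simp add: coprime_dvd_mult_right_iff)
qed

lemma has_wzs_subseq_take:
  assumes "has_wzs_subseq m A (take k xs)"
  shows "has_wzs_subseq m A xs"
proof -
  obtain I where I: "wzs_on m A (take k xs) I"
    using assms by (auto simp: has_wzs_subseq_iff_wzs_on)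
  have "wzs_on m A xs (id ` I)"
    by (rule wzs_on_reindex[OF I]) (use I in \<open>auto simp: wzs_on_def\<close>)
  then show ?thesis
    by (auto simp: has_wzs_subseq_iff_wzs_on)
qed

lemma has_wzs_subseq_if_length_ge:
  assumes "1 \<in> A" "m > 0" "nat m \<le> length xs"
  shows "has_wzs_subseq m A xs"
proof -
  define s where "s j = (\<Sum>i<j. xs ! i) mod m" for j
  have "s ` {0..nat m} \<subseteq> {0..<m}"
    using assms(2) by (auto simp: s_def)
  then have "card (s ` {0..nat m}) \<le> nat m"
    using card_mono[of "{0..<m}"] by simp
  then have "\<not> inj_on s {0..nat m}"
    by (auto dest: card_image)
  then have "\<exists>j k. j < k \<and> k \<le> nat m \<and> s j = s k"
    unfolding inj_on_def by (metis atLeastAtMost_iff linorder_neqE_nat)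
  then obtain j k where jk: "j < k" "k \<le> nat m" "s j = s k"
    by blast
  have "(\<Sum>i<k. xs ! i) = (\<Sum>i<j. xs ! i) + (\<Sum>i\<in>{j..<k}. 1 * xs ! i)"
    using jk(1) by (simp add: lessThan_atLeast0 sum.atLeastLessThan_concat)
  moreover have "m dvd (\<Sum>i<k. xs ! i) - (\<Sum>i<j. xs ! i)"
    using jk(3)[symmetric] by (simp add: s_def mod_eq_dvd_iff)
  ultimately have "m dvd (\<Sum>i\<in>{j..<k}. 1 * xs ! i)"
    by simp
  then have "wzs_on m A xs {j..<k}"
    using assms(1,3) jk unfolding wzs_on_def by (intro conjI exI[of _ "\<lambda>_. 1"]) auto
  then show ?thesis
    by (auto simp: has_wzs_subseq_iff_wzs_on)
qed

lemma has_wzs_subseq_of_length_Davenport: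
  assumes "1 \<in> A" "m > 0" "length xs = Davenport m A" "set xs \<subseteq> Zmod m"
  shows "has_wzs_subseq m A xs"
proof -
  have "\<forall>xs. length xs = Davenport m A \<and> set xs \<subseteq> Zmod m \<longrightarrow> has_wzs_subseq m A xs"
    unfolding Davenport_def
    by (rule LeastI[of _ "nat m"]) (use has_wzs_subseq_if_length_ge[OF assms(1,2)] in auto)
  then show ?thesis
    using assms(3,4) by blast
qed

lemma exists_wzs_on_subset_of_card_Davenport:
  assumes "1 \<in> A" "m > 0" "T \<subseteq> {..<length xs}" "card T = Davenport m A"
  shows "\<exists>J \<subseteq> T. wzs_on m A xs J"
proof -
  define ks where "ks = sorted_list_of_set T"
  have "finite T"
    using assms(3) finite_subset by blast
  then have ks: "distinct ks" "set ks = T" "length ks = card T"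
    by (simp_all add: ks_def)
  let ?ys = "map (\<lambda>k. xs ! k mod m) ks"
  have "has_wzs_subseq m A ?ys"
    using assms(1,2,4) ks(3) by (intro has_wzs_subseq_of_length_Davenport) (auto simp: Zmod_def)
  then obtain I where I: "wzs_on m A ?ys I"
    by (auto simp: has_wzs_subseq_iff_wzs_on)
  then have I': "I \<subseteq> {..<length ks}"
    by (simp add: wzs_on_def)
  have "wzs_on m A xs ((!) ks ` I)"
  proof (rule wzs_on_reindex[OF I])
    show "inj_on ((!) ks) I"
      using I' ks(1) nth_eq_iff_index_eq unfolding inj_on_def by (metis lessThan_iff subsetD)
    show "(!) ks ` I \<subseteq> {..<length xs}"
      using I' assms(3) ks(2) nth_mem by fastforce
    show "[xs ! (ks ! i) = ?ys ! i] (mod m)" if "i \<in> I" for i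
      using I' that by (auto simp: cong_def)
  qed
  moreover have "(!) ks ` I \<subseteq> T"
    using I' ks(2) nth_mem by fastforce
  ultimately show ?thesis
    by blast
qed

lemma Davenport_eqI:
  assumes "\<And>xs. length xs = Suc k \<Longrightarrow> set xs \<subseteq> Zmod m \<Longrightarrow> has_wzs_subseq m A xs"
    and "length ys = k" "set ys \<subseteq> Zmod m" "\<not> has_wzs_subseq m A ys"
  shows "Davenport m A = Suc k"
  unfolding Davenport_def
proof (rule Least_equality)
  fix k' assume k': "\<forall>xs. length xs = k' \<and> set xs \<subseteq> Zmod m \<longrightarrow> has_wzs_subseq m A xs"
  show "Suc k \<le> k'"
  proof (rule ccontr)
    assume "\<not> Suc k \<le> k'"
    then have "length (take k' ys) = k'" "set (take k' ys) \<subseteq> Zmod m"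
      using assms(2,3) set_take_subset[of k' ys] by auto
    then have "has_wzs_subseq m A (take k' ys)"
      using k' by blast
    then show False
      using assms(4) has_wzs_subseq_take by blast
  qed
qed (use assms(1) in blast)

lemma has_wzs_subseq_equiv_wrt:
  assumes "equiv_wrt m A xs ys" "has_wzs_subseq m A xs"
    and "\<And>a b. a \<in> A \<Longrightarrow> b \<in> A \<Longrightarrow> (a * b) mod m \<in> A"
    and "\<And>a. a \<in> A \<Longrightarrow> \<exists>b\<in>A. [a * b = 1] (mod m)"
  shows "has_wzs_subseq m A ys"
proof -
  obtain a c \<pi> where a: "\<forall>i<length xs. a i \<in> A" and \<pi>: "\<pi> permutes {..<length xs}"
    and ys: "\<forall>i<length xs. ys ! \<pi> i = (c * a i * xs ! i) mod m" and len: "length xs = length ys"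
    using assms(1) unfolding equiv_wrt_def by (elim conjE exE) fast
  have "\<forall>i. \<exists>b. i < length xs \<longrightarrow> b \<in> A \<and> [a i * b = 1] (mod m)"
    using assms(4) a by blast
  then obtain b where b: "\<And>i. i < length xs \<Longrightarrow> b i \<in> A \<and> [a i * b i = 1] (mod m)"
    by (metis choice)
  obtain I w where I: "I \<subseteq> {..<length xs}" "I \<noteq> {}"
    and w: "\<forall>i\<in>I. w i \<in> A" "m dvd (\<Sum>i\<in>I. w i * xs ! i)"
    using assms(2) unfolding has_wzs_subseq_iff_wzs_on wzs_on_def by blast
  \<comment> \<open>weight \<open>w i / a i\<close> at position \<open>\<pi> i\<close>; the common factor \<open>c\<close> does not matter\<close>
  define w' where "w' = (\<lambda>j. (w j * b j) mod m) \<circ> inv_into {..<length xs} \<pi>"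
  have inj\<pi>: "inj_on \<pi> {..<length xs}"
    using permutes_inj[OF \<pi>] by (rule inj_on_subset) simp
  then have inj: "inj_on \<pi> I"
    using I(1) by (rule inj_on_subset)
  have inv: "inv_into {..<length xs} \<pi> (\<pi> i) = i" if "i \<in> I" for i
    using inj\<pi> I(1) that by (intro inv_into_f_f) auto
  have "(\<Sum>j\<in>\<pi> ` I. w' j * ys ! j) = (\<Sum>i\<in>I. (w i * b i) mod m * ((c * a i * xs ! i) mod m))"
    using inj I(1) ys inv by (auto simp: sum.reindex w'_def intro!: sum.cong)
  also have "[\<dots> = (\<Sum>i\<in>I. (w i * b i) * (c * a i * xs ! i))] (mod m)"
    by (intro cong_sum cong_mult) (simp_all add: cong_def)
  also have "(\<Sum>i\<in>I. (w i * b i) * (c * a i * xs ! i)) = (\<Sum>i\<in>I. (a i * b i) * (c * (w i * xs ! i)))"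
    by (simp add: algebra_simps)
  also have "[\<dots> = (\<Sum>i\<in>I. 1 * (c * (w i * xs ! i)))] (mod m)"
    using b I(1) by (intro cong_sum cong_mult cong_refl) auto
  also have "(\<Sum>i\<in>I. 1 * (c * (w i * xs ! i))) = c * (\<Sum>i\<in>I. w i * xs ! i)"
    by (simp add: sum_distrib_left)
  finally have "m dvd (\<Sum>j\<in>\<pi> ` I. w' j * ys ! j)"
    using w(2) cong_dvd_iff dvd_mult by blast
  moreover have "\<forall>j\<in>\<pi> ` I. w' j \<in> A"
    using I(1) w(1) b assms(3) inv by (auto simp: w'_def)
  moreover have "\<pi> ` I \<subseteq> {..<length ys}"
    using I(1) \<pi> len permutes_image by fastforce
  ultimately show ?thesis
    using I(2) unfolding has_wzs_subseq_iff_wzs_on wzs_on_def by blast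
qed

section \<open>Legendre symbols and the squares modulo a prime\<close>

lemma coprime_prime_right_iff:
  fixes p a :: int
  assumes "prime p"
  shows "coprime a p \<longleftrightarrow> \<not> p dvd a"
proof
  assume "coprime a p"
  show "\<not> p dvd a"
  proof
    assume "p dvd a"
    with \<open>coprime a p\<close> have "is_unit p"
      by (intro coprime_common_divisor[of a p p]) simp_all
    with assms show False
      using not_prime_unit by blast
  qed
next
  assume "\<not> p dvd a"
  then show "coprime a p"
    using prime_imp_coprime[OF assms] coprime_commute by blast
qed

lemma Legendre_cong:
  assumes "[a = b] (mod p)"
  shows "Legendre a p = Legendre b p"
proof -
  have "[c = a] (mod p) \<longleftrightarrow> [c = b] (mod p)" for c
    using assms by (simp add: cong_def)
  moreover have "[a = 0] (mod p) \<longleftrightarrow> [b = 0] (mod p)"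
    using assms by (simp add: cong_def)
  ultimately show ?thesis
    unfolding Legendre_def QuadRes_def by simp
qed

lemma Legendre_eq_0_iff: "Legendre a p = 0 \<longleftrightarrow> p dvd a"
  by (simp add: Legendre_def cong_0_iff)

lemma Legendre_cases: "\<not> p dvd a \<Longrightarrow> Legendre a p = 1 \<or> Legendre a p = -1"
  by (auto simp: Legendre_def cong_0_iff)

lemma Legendre_square:
  fixes p a :: int
  assumes "prime p" "\<not> p dvd a"
  shows "Legendre (a ^ 2) p = 1"
proof -
  have "QuadRes p (a ^ 2)"
    unfolding QuadRes_def by (blast intro: cong_refl)
  moreover have "\<not> p dvd a ^ 2"
    using assms by (simp add: prime_dvd_power_iff)
  ultimately show ?thesis
    by (simp add: Legendre_def cong_0_iff)
qed

lemma Legendre_one: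
  fixes p :: int
  assumes "prime p"
  shows "Legendre 1 p = 1"
  using Legendre_square[OF assms, of 1] prime_gt_1_int[OF assms] by simp

lemma Legendre_mult:
  fixes p :: int
  assumes "prime p" "p > 2"
  shows "Legendre (a * b) p = Legendre a p * Legendre b p"
proof -
  have P: "prime (nat p)" "2 < nat p"
    using assms by auto
  let ?e = "(nat p - 1) div 2"
  have "[Legendre (a * b) p = a ^ ?e * b ^ ?e] (mod p)"
    using euler_criterion[OF P, of "a * b"] assms(2) by (simp add: power_mult_distrib)
  moreover have "[Legendre a p * Legendre b p = a ^ ?e * b ^ ?e] (mod p)"
    using euler_criterion[OF P, of a] euler_criterion[OF P, of b] assms(2) by (simp add: cong_mult)
  ultimately have "[Legendre (a * b) p = Legendre a p * Legendre b p] (mod p)"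
    by (rule cong_trans[OF _ cong_sym])
  then have dvd: "p dvd Legendre (a * b) p - Legendre a p * Legendre b p"
    by (simp add: cong_iff_dvd_diff)
  have L: "Legendre x p \<in> {-1, 0, 1}" for x
    by (simp add: Legendre_def)
  have "Legendre a p * Legendre b p \<in> {-1, 0, 1}"
    using L[of a] L[of b] by auto
  then have small: "\<bar>Legendre (a * b) p - Legendre a p * Legendre b p\<bar> < p"
    using L[of "a * b"] assms(2) by auto
  show ?thesis
  proof (rule ccontr)
    assume "Legendre (a * b) p \<noteq> Legendre a p * Legendre b p"
    then have "\<bar>p\<bar> \<le> \<bar>Legendre (a * b) p - Legendre a p * Legendre b p\<bar>"
      using dvd by (intro dvd_imp_le_int) simp_all
    then show False
      using small by simp
  qed
qed

lemma Legendre_minus_mult_exchange: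
  fixes p :: int
  assumes "prime p" "p > 2"
  shows "Legendre (- (a * c)) p * Legendre (- (b * d)) p =
    Legendre (- (a * b)) p * Legendre (- (c * d)) p"
proof -
  have "(- (a * c)) * (- (b * d)) = (- (a * b)) * (- (c * d))"
    by simp
  then show ?thesis
    by (metis Legendre_mult[OF assms])
qed

lemma square_mod_in_Qsq:
  fixes q y :: int
  assumes "prime q" "\<not> q dvd y"
  shows "y ^ 2 mod q \<in> Qsq q"
proof -
  have "coprime (y mod q) q"
    using assms by (simp add: coprime_prime_right_iff dvd_mod_iff)
  then have "y mod q \<in> Umod q"
    using prime_gt_0_int[OF assms(1)] by (simp add: Umod_def Zmod_def)
  moreover have "y ^ 2 mod q = (y mod q) ^ 2 mod q"
    by (simp add: power_mod)
  ultimately show ?thesis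
    unfolding Qsq_def by blast
qed

lemma Qsq_iff:
  fixes q a :: int
  assumes "prime q"
  shows "a \<in> Qsq q \<longleftrightarrow> 0 \<le> a \<and> a < q \<and> Legendre a q = 1"
proof
  assume "a \<in> Qsq q"
  then obtain x where x: "a = x ^ 2 mod q" "x \<in> Umod q"
    by (auto simp: Qsq_def)
  have "\<not> q dvd x"
    using x(2) by (simp add: Umod_def coprime_prime_right_iff[OF assms])
  then have "Legendre a q = 1"
    using x(1) Legendre_cong[of "x ^ 2 mod q" "x ^ 2" q] Legendre_square[OF assms]
    by (simp add: cong_def)
  then show "0 \<le> a \<and> a < q \<and> Legendre a q = 1"
    using x(1) prime_gt_0_int[OF assms] by simp
next
  assume a: "0 \<le> a \<and> a < q \<and> Legendre a q = 1"
  then have "QuadRes q a" "\<not> q dvd a"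
    by (auto simp: Legendre_def cong_0_iff split: if_splits)
  then obtain y where y: "[y ^ 2 = a] (mod q)"
    by (auto simp: QuadRes_def)
  have "\<not> q dvd y"
  proof
    assume "q dvd y"
    then have "q dvd y ^ 2"
      by (simp add: power2_eq_square)
    then show False
      using cong_dvd_iff[OF y] \<open>\<not> q dvd a\<close> by simp
  qed
  moreover have "y ^ 2 mod q = a"
    using y a by (simp add: cong_def)
  ultimately show "a \<in> Qsq q"
    using square_mod_in_Qsq[OF assms, of y] by simp
qed

lemma one_in_Qsq: "prime q \<Longrightarrow> (1::int) \<in> Qsq q"
  using square_mod_in_Qsq[of q 1] prime_gt_1_int[of q] by (simp add: not_prime_unit)

lemma Qsq_coprime:
  assumes "prime q" "r \<in> Qsq q"
  shows "coprime r q"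
proof -
  have "Legendre r q \<noteq> 0"
    using assms by (simp add: Qsq_iff)
  then show ?thesis
    by (simp add: coprime_prime_right_iff[OF assms(1)] Legendre_eq_0_iff)
qed

lemma wzs_on_Qsq_singleton_iff:
  assumes "prime q"
  shows "wzs_on q (Qsq q) zs {i} \<longleftrightarrow> i < length zs \<and> q dvd zs ! i"
proof
  assume h: "wzs_on q (Qsq q) zs {i}"
  then have "q dvd zs ! i"
    by (rule wzs_on_singleton_dvd) (rule Qsq_coprime[OF assms])
  moreover have "i < length zs"
    using h by (simp add: wzs_on_def)
  ultimately show "i < length zs \<and> q dvd zs ! i"
    by simp
next
  assume "i < length zs \<and> q dvd zs ! i"
  then show "wzs_on q (Qsq q) zs {i}"
    using one_in_Qsq[OF assms] unfolding wzs_on_def by (intro conjI exI[of _ "\<lambda>_. 1"]) auto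
qed

lemma exists_Qsq_pair_iff:
  fixes q x y :: int
  assumes q: "prime q" "q > 2" and xy: "\<not> q dvd x" "\<not> q dvd y"
  shows "(\<exists>r\<in>Qsq q. \<exists>s\<in>Qsq q. q dvd r * x + s * y) \<longleftrightarrow> Legendre (- (x * y)) q = 1"
proof
  assume "\<exists>r\<in>Qsq q. \<exists>s\<in>Qsq q. q dvd r * x + s * y"
  then obtain r s where rs: "Legendre r q = 1" "Legendre s q = 1" "[r * x = s * - y] (mod q)"
    using q(1) by (auto simp: Qsq_iff cong_iff_dvd_diff)
  have "Legendre x q = Legendre (r * x) q"
    using Legendre_mult[OF q, of r x] rs(1) by simp
  also have "\<dots> = Legendre (s * - y) q"
    using Legendre_cong[OF rs(3)] .
  also have "\<dots> = Legendre (- y) q"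
    using Legendre_mult[OF q, of s "- y"] rs(2) by simp
  finally have "Legendre x q = Legendre (- y) q" .
  moreover have "Legendre (- y) q = 1 \<or> Legendre (- y) q = -1"
    using xy(2) by (intro Legendre_cases) simp
  ultimately show "Legendre (- (x * y)) q = 1"
    using Legendre_mult[OF q, of x "- y"] by auto
next
  assume "Legendre (- (x * y)) q = 1"
  then obtain t where t: "[t ^ 2 = - (x * y)] (mod q)"
    by (auto simp: Legendre_def QuadRes_def split: if_splits)
  have "\<not> q dvd x * y"
    using q(1) xy prime_dvd_mult_iff by blast
  have "\<not> q dvd t"
  proof
    assume "q dvd t"
    then have "q dvd t ^ 2"
      by (simp add: power2_eq_square)
    then show False
      using cong_dvd_iff[OF t] \<open>\<not> q dvd x * y\<close> by simp
  qed
  have "[y ^ 2 mod q * x + t ^ 2 mod q * y = y ^ 2 * x + (- (x * y)) * y] (mod q)"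
    using t by (intro cong_add cong_mult) (simp_all add: cong_def)
  then have "q dvd y ^ 2 mod q * x + t ^ 2 mod q * y"
    by (simp add: cong_0_iff power2_eq_square algebra_simps)
  then show "\<exists>r\<in>Qsq q. \<exists>s\<in>Qsq q. q dvd r * x + s * y"
    using square_mod_in_Qsq[OF q(1)] xy(2) \<open>\<not> q dvd t\<close> by blast
qed

lemma wzs_on_Qsq_pair_iff:
  assumes q: "prime q" "q > 2" and ij: "i \<noteq> j" "i < length zs" "j < length zs"
    and "\<not> q dvd zs ! i" "\<not> q dvd zs ! j"
  shows "wzs_on q (Qsq q) zs {i, j} \<longleftrightarrow> Legendre (- (zs ! i * zs ! j)) q = 1"
proof -
  have "wzs_on q (Qsq q) zs {i, j} \<longleftrightarrow>
      (\<exists>r\<in>Qsq q. \<exists>s\<in>Qsq q. q dvd r * zs ! i + s * zs ! j)"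
  proof
    assume "wzs_on q (Qsq q) zs {i, j}"
    then show "\<exists>r\<in>Qsq q. \<exists>s\<in>Qsq q. q dvd r * zs ! i + s * zs ! j"
      using ij(1) unfolding wzs_on_def by auto
  next
    assume "\<exists>r\<in>Qsq q. \<exists>s\<in>Qsq q. q dvd r * zs ! i + s * zs ! j"
    then obtain r s where "r \<in> Qsq q" "s \<in> Qsq q" "q dvd r * zs ! i + s * zs ! j"
      by blast
    then show "wzs_on q (Qsq q) zs {i, j}"
      using ij unfolding wzs_on_def by (intro conjI exI[of _ "\<lambda>t. if t = i then r else s"]) auto
  qed
  also have "\<dots> \<longleftrightarrow> Legendre (- (zs ! i * zs ! j)) q = 1"
    using assms by (intro exists_Qsq_pair_iff) auto
  finally show ?thesis .
qed

section \<open>The weight set \<open>L(p q; p)\<close>\<close>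

lemma Jac_mult_primes:
  fixes p q a :: int
  assumes "prime p" "prime q" "p \<noteq> q"
  shows "Jac a (p * q) = Legendre a p * Legendre a q"
proof -
  have "prime_factors (p * q) = {p, q}"
    using assms by (auto simp: prime_factors_product prime_prime_factors prime_gt_0_int)
  moreover have mult: "multiplicity r (r * s) = 1" if "prime r" "prime s" "r \<noteq> s" for r s :: int
  proof -
    have "multiplicity r (r * s) = multiplicity r r + multiplicity r s"
      using that by (intro prime_elem_multiplicity_mult_distrib) auto
    moreover have "multiplicity r r = 1"
      using that(1) by (intro multiplicity_self) (auto simp: not_prime_unit)
    ultimately show ?thesis
      using that by (simp add: prime_multiplicity_other)
  qed
  ultimately have "multiplicity p (p * q) = 1" "multiplicity q (p * q) = 1"
    using mult[of q p] assms by (auto simp: ac_simps)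
  with \<open>prime_factors (p * q) = {p, q}\<close> show ?thesis
    using assms(3) by (simp add: Jac_def)
qed

lemma exists_weights_not_dvd_dvd_sum:
  fixes p :: int and z :: "nat \<Rightarrow> int"
  assumes p: "prime p" "p > 2" and "finite I" and card: "card {t \<in> I. \<not> p dvd z t} \<noteq> 1"
  shows "\<exists>\<beta>. (\<forall>t\<in>I. \<not> p dvd \<beta> t) \<and> p dvd (\<Sum>t\<in>I. \<beta> t * z t)"
proof -
  have "\<not> p dvd 1" "\<not> p dvd 2"
    using p not_prime_unit zdvd_imp_le[of p 2] by auto
  show ?thesis
  proof (cases "{t \<in> I. \<not> p dvd z t} = {}")
    case True
    then have "p dvd (\<Sum>t\<in>I. 1 * z t)"
      by (intro dvd_sum) auto
    then show ?thesis
      using \<open>\<not> p dvd 1\<close> by (intro exI[of _ "\<lambda>_. 1"]) simp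
  next
    case False
    then obtain i where i: "i \<in> {t \<in> I. \<not> p dvd z t}"
      by blast
    moreover have "{t \<in> I. \<not> p dvd z t} \<noteq> {i}"
      using card by auto
    ultimately obtain j where "j \<in> {t \<in> I. \<not> p dvd z t}" "j \<noteq> i"
      by blast
    with i have ij: "i \<in> I" "j \<in> I" "i \<noteq> j" "\<not> p dvd z i" "\<not> p dvd z j"
      by auto
    define R where "R = (\<Sum>t\<in>I - {i} - {j}. z t)"
    \<comment> \<open>the candidates differ by the unit \<open>z j\<close>; \<open>p > 2\<close> makes both 1 and 2 units\<close>
    have "\<not> p dvd R + 1 * z j \<or> \<not> p dvd R + 2 * z j"
      using ij(5) dvd_diff[of p "R + 2 * z j" "R + 1 * z j"] by auto
    then obtain \<tau> where \<tau>: "\<not> p dvd \<tau>" "\<not> p dvd R + \<tau> * z j"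
      using \<open>\<not> p dvd 1\<close> \<open>\<not> p dvd 2\<close> by blast
    obtain u where u: "[z i * u = 1] (mod p)"
      using cong_solve_coprime_int ij(4) coprime_prime_right_iff[OF p(1)] by blast
    define s where "s = - (R + \<tau> * z j) * u"
    have s: "[s * z i = - (R + \<tau> * z j)] (mod p)"
      using cong_mult[OF cong_refl[of "- (R + \<tau> * z j)"] u] by (simp add: s_def ac_simps)
    have "\<not> p dvd s"
      using cong_dvd_iff[OF s] \<tau>(2) dvd_minus_iff[of p "R + \<tau> * z j"] by auto
    define \<beta> where "\<beta> t = (if t = i then s else if t = j then \<tau> else 1)" for t
    have "(\<Sum>t\<in>I. \<beta> t * z t) = \<beta> i * z i + (\<Sum>t\<in>I - {i}. \<beta> t * z t)"
      using assms(3) ij(1) by (rule sum.remove)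
    also have "(\<Sum>t\<in>I - {i}. \<beta> t * z t) = \<beta> j * z j + (\<Sum>t\<in>I - {i} - {j}. \<beta> t * z t)"
      using assms(3) ij by (intro sum.remove) auto
    also have "(\<Sum>t\<in>I - {i} - {j}. \<beta> t * z t) = R"
      unfolding R_def by (intro sum.cong) (auto simp: \<beta>_def)
    also have "\<beta> i * z i + (\<beta> j * z j + R) = s * z i + (\<tau> * z j + R)"
      using ij(3) by (simp add: \<beta>_def)
    also have "[\<dots> = - (R + \<tau> * z j) + (\<tau> * z j + R)] (mod p)"
      using s by (intro cong_add cong_refl)
    finally have "p dvd (\<Sum>t\<in>I. \<beta> t * z t)"
      by (simp add: cong_0_iff)
    moreover have "\<forall>t\<in>I. \<not> p dvd \<beta> t"
      using \<open>\<not> p dvd s\<close> \<tau>(1) \<open>\<not> p dvd 1\<close> by (auto simp: \<beta>_def)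
    ultimately show ?thesis
      by blast
  qed
qed

(* p plays the role of the prime p' of the paper. *)
locale odd_prime_pair =
  fixes p q :: int
  assumes prime_p: "prime p" and prime_q: "prime q" and p_neq_q: "p \<noteq> q"
    and p_gt_2: "p > 2" and q_gt_2: "q > 2"
begin

abbreviation A :: "int set" where
  "A \<equiv> Lset (p * q) p"

lemma pq_pos: "p * q > 0"
  using prime_gt_0_int[OF prime_p] prime_gt_0_int[OF prime_q] by simp

lemma Lset_iff: "a \<in> A \<longleftrightarrow> 0 \<le> a \<and> a < p * q \<and> \<not> p dvd a \<and> Legendre a q = 1"
proof -
  have "coprime a (p * q) \<longleftrightarrow> \<not> p dvd a \<and> \<not> q dvd a"
    by (simp add: coprime_prime_right_iff prime_p prime_q)
  moreover have "\<not> p dvd a \<Longrightarrow> Legendre a p \<noteq> 0"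
    by (simp add: Legendre_eq_0_iff)
  moreover have "Legendre a q = 1 \<Longrightarrow> \<not> q dvd a"
    by (auto simp flip: Legendre_eq_0_iff)
  ultimately show ?thesis
    unfolding Lset_def Umod_def Zmod_def Jac_mult_primes[OF prime_p prime_q p_neq_q]
    by auto
qed

lemma Lset_coprime: "a \<in> A \<Longrightarrow> coprime a (p * q)"
  by (auto simp: Lset_iff coprime_prime_right_iff prime_p prime_q simp flip: Legendre_eq_0_iff)

lemma Legendre_mod_pq: "Legendre (x mod (p * q)) q = Legendre x q"
  by (rule Legendre_cong) (simp add: cong_def mod_mod_cancel)

lemma Lset_mult: "a \<in> A \<Longrightarrow> b \<in> A \<Longrightarrow> (a * b) mod (p * q) \<in> A"
  using pq_pos prime_p
  by (auto simp: Lset_iff Legendre_mod_pq Legendre_mult[OF prime_q q_gt_2] dvd_mod_iff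
      prime_dvd_mult_iff)

lemma Lset_inverse:
  assumes "a \<in> A"
  shows "\<exists>b\<in>A. [a * b = 1] (mod p * q)"
proof -
  obtain x where x: "[a * x = 1] (mod p * q)"
    using cong_solve_coprime_int Lset_coprime[OF assms] by blast
  define b where "b = x mod (p * q)"
  have ab: "[a * b = 1] (mod p * q)"
    using x by (simp add: b_def cong_def mod_mult_right_eq)
  then have "[a * b = 1] (mod p)" "[a * b = 1] (mod q)"
    by (auto elim: cong_dvd_modulus)
  have "\<not> p dvd b"
  proof
    assume "p dvd b"
    then have "p dvd 1"
      using cong_dvd_iff[OF \<open>[a * b = 1] (mod p)\<close>] by simp
    then show False
      using prime_p not_prime_unit by blast
  qed
  moreover have "Legendre a q * Legendre b q = 1"
    using Legendre_cong[OF \<open>[a * b = 1] (mod q)\<close>]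
    by (simp add: Legendre_mult[OF prime_q q_gt_2] Legendre_one[OF prime_q])
  ultimately have "b \<in> A"
    using assms pq_pos by (simp add: Lset_iff b_def)
  then show ?thesis
    using ab by blast
qed

lemma Lset_mod_q_in_Qsq: "a \<in> A \<Longrightarrow> a mod q \<in> Qsq q"
  using prime_gt_0_int[OF prime_q] Legendre_cong[of "a mod q" a q]
  by (simp add: Lset_iff Qsq_iff prime_q cong_def)

lemma Lset_crt:
  assumes "\<not> p dvd b" "Legendre c q = 1"
  shows "\<exists>a\<in>A. [a = b] (mod p) \<and> [a = c] (mod q)"
proof -
  obtain x where x: "[x = b] (mod p)" "[x = c] (mod q)"
    using binary_chinese_remainder_int primes_coprime[OF prime_p prime_q p_neq_q] by blast
  define a where "a = x mod (p * q)"
  have "[a = b] (mod p)" "[a = c] (mod q)"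
    using x by (simp_all add: a_def cong_def mod_mod_cancel)
  moreover from this have "a \<in> A"
    using assms pq_pos Legendre_cong[of a c q] by (simp add: Lset_iff a_def cong_dvd_iff)
  ultimately show ?thesis
    by blast
qed

section \<open>Liftable relations and \<open>D_A(p q) = 4\<close>\<close>

(* The count condition is exactly what allows weights prime to p with vanishing sum modulo p, so a
   liftable relation lifts through the Chinese remainder theorem (has_wzs_subseq_Lset_if_liftable). *)
definition liftable :: "int list \<Rightarrow> nat set \<Rightarrow> bool" where
  "liftable zs J \<longleftrightarrow> wzs_on q (Qsq q) zs J \<and> card {t \<in> J. \<not> p dvd zs ! t} \<noteq> 1"

lemma has_wzs_subseq_Lset_if_liftable:
  assumes "liftable zs J"
  shows "has_wzs_subseq (p * q) A zs"
proof -
  have J: "wzs_on q (Qsq q) zs J" "card {t \<in> J. \<not> p dvd zs ! t} \<noteq> 1"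
    using assms by (simp_all add: liftable_def)
  obtain \<alpha> where \<alpha>: "\<forall>t\<in>J. \<alpha> t \<in> Qsq q" "q dvd (\<Sum>t\<in>J. \<alpha> t * zs ! t)"
    using J(1) by (auto simp: wzs_on_def)
  obtain \<beta> where \<beta>: "\<forall>t\<in>J. \<not> p dvd \<beta> t" "p dvd (\<Sum>t\<in>J. \<beta> t * zs ! t)"
    using exists_weights_not_dvd_dvd_sum[OF prime_p p_gt_2 wzs_on_finite[OF J(1)] J(2)]
    by blast
  have "\<exists>a. a \<in> A \<and> [a = \<beta> t] (mod p) \<and> [a = \<alpha> t] (mod q)" if "t \<in> J" for t
    using Lset_crt[of "\<beta> t" "\<alpha> t"] \<alpha>(1) \<beta>(1) that by (auto simp: Qsq_iff prime_q)
  then have "\<forall>t\<in>J. \<exists>a. a \<in> A \<and> [a = \<beta> t] (mod p) \<and> [a = \<alpha> t] (mod q)"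
    by blast
  then obtain a where a: "\<forall>t\<in>J. a t \<in> A \<and> [a t = \<beta> t] (mod p) \<and> [a t = \<alpha> t] (mod q)"
    by (rule bchoice[THEN exE]) blast
  have "[(\<Sum>t\<in>J. a t * zs ! t) = (\<Sum>t\<in>J. \<beta> t * zs ! t)] (mod p)"
    using a by (intro cong_sum cong_mult cong_refl) auto
  then have "p dvd (\<Sum>t\<in>J. a t * zs ! t)"
    using \<beta>(2) cong_dvd_iff by blast
  moreover have "[(\<Sum>t\<in>J. a t * zs ! t) = (\<Sum>t\<in>J. \<alpha> t * zs ! t)] (mod q)"
    using a by (intro cong_sum cong_mult cong_refl) auto
  then have "q dvd (\<Sum>t\<in>J. a t * zs ! t)"
    using \<alpha>(2) cong_dvd_iff by blast
  ultimately have "p * q dvd (\<Sum>t\<in>J. a t * zs ! t)"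
    using primes_coprime[OF prime_p prime_q p_neq_q] by (rule divides_mult)
  then have "wzs_on (p * q) A zs J"
    using J(1) a unfolding wzs_on_def by blast
  then show ?thesis
    by (auto simp: has_wzs_subseq_iff_wzs_on)
qed

lemma exists_wzs_on_Qsq_within_three:
  assumes "Davenport q (Qsq q) = 3" "T \<subseteq> {..<length zs}" "card T = 3"
  shows "\<exists>J \<subseteq> T. wzs_on q (Qsq q) zs J"
  using assms one_in_Qsq[OF prime_q] prime_gt_0_int[OF prime_q]
  by (intro exists_wzs_on_subset_of_card_Davenport) auto

lemma wzs_on_Qsq_not_singleton:
  assumes "wzs_on q (Qsq q) zs J" "\<forall>t\<in>J. \<not> q dvd zs ! t"
  shows "card J \<noteq> 1"
proof
  assume "card J = 1"
  then obtain t where "J = {t}"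
    by (rule card_1_singletonE)
  then show False
    using assms by (simp add: wzs_on_Qsq_singleton_iff prime_q)
qed

lemma liftable_if_dvd_q:
  assumes D3: "Davenport q (Qsq q) = 3" and d: "d < length zs" "q dvd zs ! d"
    and T: "T \<subseteq> {..<length zs}" "d \<notin> T" "card T = 3"
  shows "\<exists>J. liftable zs J"
proof -
  have wd: "wzs_on q (Qsq q) zs {d}"
    using d by (simp add: wzs_on_Qsq_singleton_iff prime_q)
  show ?thesis
  proof (cases "p dvd zs ! d")
    case True
    then have none: "{t \<in> {d}. \<not> p dvd zs ! t} = {}"
      by auto
    have "liftable zs {d}"
      using wd unfolding liftable_def none by simp
    then show ?thesis
      by blast
  next
    case False
    obtain J where J: "J \<subseteq> T" "wzs_on q (Qsq q) zs J"
      using exists_wzs_on_Qsq_within_three[OF D3 T(1,3)] by blast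
    show ?thesis
    proof (cases "liftable zs J")
      case False
      then have "card {t \<in> J. \<not> p dvd zs ! t} = 1"
        using J(2) by (simp add: liftable_def)
      moreover have "{t \<in> J \<union> {d}. \<not> p dvd zs ! t} = insert d {t \<in> J. \<not> p dvd zs ! t}"
        using \<open>\<not> p dvd zs ! d\<close> by auto
      moreover have "d \<notin> J" "finite J"
        using J T(2) wzs_on_finite by auto
      ultimately have "card {t \<in> J \<union> {d}. \<not> p dvd zs ! t} = 2"
        by simp
      moreover have "wzs_on q (Qsq q) zs (J \<union> {d})"
        using wzs_on_Un[OF J(2) wd] \<open>d \<notin> J\<close> by simp
      ultimately have "liftable zs (J \<union> {d})"
        by (simp add: liftable_def)
      then show ?thesis
        by blast
    qed blast
  qed
qed

lemma liftable_if_same_residue_class: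
  assumes D3: "Davenport q (Qsq q) = 3" and T: "T \<subseteq> {..<length zs}" "card T = 3"
    and nq: "\<forall>t\<in>T. \<not> q dvd zs ! t"
    and same: "(\<forall>t\<in>T. p dvd zs ! t) \<or> (\<forall>t\<in>T. \<not> p dvd zs ! t)"
  shows "\<exists>J. liftable zs J"
proof -
  obtain J where J: "J \<subseteq> T" "wzs_on q (Qsq q) zs J"
    using exists_wzs_on_Qsq_within_three[OF D3 T] by blast
  have "card J \<noteq> 1"
    using J nq by (intro wzs_on_Qsq_not_singleton) auto
  moreover have "{t \<in> J. \<not> p dvd zs ! t} = {} \<or> {t \<in> J. \<not> p dvd zs ! t} = J"
    using same J(1) by auto
  ultimately have "card {t \<in> J. \<not> p dvd zs ! t} \<noteq> 1"
    by (metis card.empty zero_neq_one)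
  then have "liftable zs J"
    using J(2) by (simp add: liftable_def)
  then show ?thesis
    by blast
qed

lemma liftable_if_mixed_pair:
  assumes ijkl: "distinct [i, j, k, l]" "i < length zs" "j < length zs" "k < length zs" "l < length zs"
    and p: "p dvd zs ! i" "p dvd zs ! j" "\<not> p dvd zs ! k" "\<not> p dvd zs ! l"
    and q: "\<not> q dvd zs ! i" "\<not> q dvd zs ! j" "\<not> q dvd zs ! k" "\<not> q dvd zs ! l"
    and ik: "wzs_on q (Qsq q) zs {i, k}"
  shows "\<exists>J. liftable zs J"
proof -
  let ?L = "\<lambda>a b. Legendre (- (zs ! a * zs ! b)) q"
  have pair: "wzs_on q (Qsq q) zs {a, b} \<longleftrightarrow> ?L a b = 1"
    if "a \<in> {i, j, k, l}" "b \<in> {i, j, k, l}" "a \<noteq> b" for a b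
    using that ijkl q by (intro wzs_on_Qsq_pair_iff prime_q q_gt_2) auto
  have sign: "?L a b = 1 \<or> ?L a b = -1" if "a \<in> {i, j, k, l}" "b \<in> {i, j, k, l}" for a b
    using that q prime_q by (intro Legendre_cases) (auto simp: prime_dvd_mult_iff)
  consider "?L i j = 1" | "?L k l = 1" | "?L i j = -1" "?L k l = -1"
    using sign by blast
  then show ?thesis
  proof cases
    case 1
    moreover have none: "{t \<in> {i, j}. \<not> p dvd zs ! t} = {}"
      using p by auto
    ultimately have "liftable zs {i, j}"
      using pair ijkl(1) unfolding liftable_def none by simp
    then show ?thesis
      by blast
  next
    case 2
    moreover have "{t \<in> {k, l}. \<not> p dvd zs ! t} = {k, l}"
      using p by auto
    ultimately have "liftable zs {k, l}"
      using pair ijkl(1) by (simp add: liftable_def)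
    then show ?thesis
      by blast
  next
    case 3
    have "?L i k = 1"
      using pair ik ijkl(1) by simp
    then have "?L j l = 1"
      using 3 Legendre_minus_mult_exchange[OF prime_q q_gt_2, of "zs ! i" "zs ! k" "zs ! j" "zs ! l"]
      by simp
    then have "wzs_on q (Qsq q) zs ({i, k} \<union> {j, l})"
      using pair ik ijkl(1) by (intro wzs_on_Un) auto
    moreover have "{t \<in> {i, k} \<union> {j, l}. \<not> p dvd zs ! t} = {k, l}"
      using p by auto
    ultimately have "liftable zs ({i, k} \<union> {j, l})"
      using ijkl(1) by (simp add: liftable_def)
    then show ?thesis
      by blast
  qed
qed

lemma liftable_if_two_two:
  assumes D3: "Davenport q (Qsq q) = 3"
    and ijkl: "distinct [i, j, k, l]" "i < length zs" "j < length zs" "k < length zs" "l < length zs"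
    and p: "p dvd zs ! i" "p dvd zs ! j" "\<not> p dvd zs ! k" "\<not> p dvd zs ! l"
    and q: "\<not> q dvd zs ! i" "\<not> q dvd zs ! j" "\<not> q dvd zs ! k" "\<not> q dvd zs ! l"
  shows "\<exists>J. liftable zs J"
proof -
  obtain J where J: "J \<subseteq> {i, k, l}" "wzs_on q (Qsq q) zs J"
    using exists_wzs_on_Qsq_within_three[OF D3, of "{i, k, l}" zs] ijkl by auto
  show ?thesis
  proof (cases "liftable zs J")
    case False
    then have "card {t \<in> J. \<not> p dvd zs ! t} = 1"
      using J(2) by (simp add: liftable_def)
    then obtain x where x: "{t \<in> J. \<not> p dvd zs ! t} = {x}"
      by (rule card_1_singletonE)
    then have "x \<in> J" "\<not> p dvd zs ! x"
      by auto
    then have "x = k \<or> x = l"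
      using J(1) p(1) by auto
    have "J \<subseteq> {i, x}"
    proof
      fix t
      assume "t \<in> J"
      then have "t = i \<or> \<not> p dvd zs ! t"
        using J(1) p by auto
      then show "t \<in> {i, x}"
        using x \<open>t \<in> J\<close> by auto
    qed
    moreover have "J \<noteq> {x}"
      using J(2) q(3,4) \<open>x = k \<or> x = l\<close> by (auto simp: wzs_on_Qsq_singleton_iff prime_q)
    ultimately have "J = {i, x}"
      using \<open>x \<in> J\<close> by auto
    then have "wzs_on q (Qsq q) zs {i, x}"
      using J(2) by simp
    with \<open>x = k \<or> x = l\<close> show ?thesis
    proof (elim disjE)
      assume "x = k"
      with \<open>wzs_on q (Qsq q) zs {i, x}\<close> show ?thesis
        using liftable_if_mixed_pair[OF ijkl p q] by simp
    next
      assume "x = l"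
      with \<open>wzs_on q (Qsq q) zs {i, x}\<close> show ?thesis
        by (intro liftable_if_mixed_pair[of i j l k]) (use ijkl p q in auto)
    qed
  qed blast
qed

lemma exists_liftable_of_length_4:
  assumes D3: "Davenport q (Qsq q) = 3" and len: "length zs = 4"
  shows "\<exists>J. liftable zs J"
proof (cases "\<exists>d<4. q dvd zs ! d")
  case True
  then obtain d where d: "d < 4" "q dvd zs ! d"
    by blast
  have "card ({..<4} - {d}) = 3"
    using d(1) by simp
  then show ?thesis
    using liftable_if_dvd_q[OF D3, of d zs "{..<4} - {d}"] d len by auto
next
  case False
  define P where "P = {t. t < 4 \<and> p dvd zs ! t}"
  define N where "N = {t. t < 4 \<and> \<not> p dvd zs ! t}"
  have "P \<inter> N = {}" "P \<union> N = {..<4}"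
    by (auto simp: P_def N_def)
  then have "card P + card N = 4"
    using card_Un_disjoint[of P N] by (simp add: P_def N_def)
  then consider "3 \<le> card P" | "3 \<le> card N" | "card P = 2" "card N = 2"
    by linarith
  then show ?thesis
  proof cases
    case 1
    then obtain T where "T \<subseteq> P" "card T = 3"
      by (rule obtain_subset_with_card_n)
    then show ?thesis
      using liftable_if_same_residue_class[OF D3, of T zs] False len by (auto simp: P_def)
  next
    case 2
    then obtain T where "T \<subseteq> N" "card T = 3"
      by (rule obtain_subset_with_card_n)
    then show ?thesis
      using liftable_if_same_residue_class[OF D3, of T zs] False len by (auto simp: N_def)
  next
    case 3
    then obtain i j k l where "P = {i, j}" "i \<noteq> j" "N = {k, l}" "k \<noteq> l"
      by (meson card_2_iff)
    moreover from this have "i \<in> P" "j \<in> P" "k \<in> N" "l \<in> N"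
      by simp_all
    ultimately show ?thesis
      using liftable_if_two_two[OF D3, of i j k l zs] \<open>P \<inter> N = {}\<close> False len
      by (auto simp: P_def N_def)
  qed
qed

lemma has_wzs_subseq_Lset_of_length_4:
  "Davenport q (Qsq q) = 3 \<Longrightarrow> length zs = 4 \<Longrightarrow> has_wzs_subseq (p * q) A zs"
  using exists_liftable_of_length_4 has_wzs_subseq_Lset_if_liftable by blast

lemma not_has_wzs_subseq_Lset_triple:
  assumes y1: "y1 \<in> Zmod (p * q)"
    and cases: "(q dvd y1 \<and> y1 \<noteq> 0) \<or> (\<not> p dvd y1 \<and> p dvd y2 \<and> p dvd y3)"
    and no_q: "\<not> has_wzs_subseq q (Qsq q) [y2 mod q, y3 mod q]"
  shows "\<not> has_wzs_subseq (p * q) A [y1, y2, y3]"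
proof
  let ?ys = "[y1, y2, y3]"
  assume "has_wzs_subseq (p * q) A ?ys"
  then obtain I where I: "wzs_on (p * q) A ?ys I"
    by (auto simp: has_wzs_subseq_iff_wzs_on)
  have I3: "I \<subseteq> {0, 1, 2}" "I \<noteq> {}"
    using I by (auto simp: wzs_on_def numeral_3_eq_3 less_Suc_eq)
  have "\<exists>b\<in>Qsq q. [b = a] (mod q)" if "a \<in> A" for a
    using Lset_mod_q_in_Qsq[OF that] by (intro bexI[of _ "a mod q"]) (simp_all add: cong_def)
  then have Iq: "wzs_on q (Qsq q) ?ys I"
    by (intro wzs_on_change_modulus[OF I]) simp_all
  have "\<exists>b\<in>{a. \<not> p dvd a}. [b = a] (mod p)" if "a \<in> A" for a
    using that by (intro bexI[of _ a]) (simp_all add: Lset_iff)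
  then have Ip: "wzs_on p {a. \<not> p dvd a} ?ys I"
    by (intro wzs_on_change_modulus[OF I]) simp_all
  consider "I = {0}" | "I \<noteq> {0}" "0 \<in> I \<longrightarrow> q dvd y1" | "0 \<in> I" "\<not> q dvd y1"
    by blast
  then show False
  proof cases
    case 1
    then have "wzs_on (p * q) A ?ys {0}"
      using I by simp
    then have "p * q dvd ?ys ! 0"
      by (rule wzs_on_singleton_dvd) (rule Lset_coprime)
    then have "p * q dvd y1"
      by simp
    then have "y1 = 0"
      using y1 zdvd_not_zless[of y1 "p * q"] by (cases "y1 > 0") (auto simp: Zmod_def)
    then show False
      using cases prime_p by (auto simp: not_prime_unit)
  next
    case 2
    have "wzs_on q (Qsq q) ?ys (I - {0})"
      using 2 I3 by (intro wzs_on_subset[OF Iq]) auto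
    then have "wzs_on q (Qsq q) [y2 mod q, y3 mod q] ((\<lambda>i. i - 1) ` (I - {0}))"
      by (rule wzs_on_reindex) (use I3 in \<open>auto simp: inj_on_def cong_def\<close>)
    then show False
      using no_q by (auto simp: has_wzs_subseq_iff_wzs_on)
  next
    case 3
    then have p: "\<not> p dvd y1" "p dvd y2" "p dvd y3"
      using cases by auto
    have "wzs_on p {a. \<not> p dvd a} ?ys {0}"
      using 3(1) p I3 by (intro wzs_on_subset[OF Ip]) auto
    then have "p dvd ?ys ! 0"
      by (rule wzs_on_singleton_dvd) (simp add: coprime_prime_right_iff[OF prime_p])
    then show False
      using p(1) by simp
  qed
qed

end

theorem theorem5p6:
  fixes p' q x1 x2 x3 :: int
  assumes "prime p'" and "prime q" and "p' \<noteq> q" and "p' \<ge> 7" and "q \<ge> 7"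
    and "x1 \<in> Zmod (p' * q)" and "x2 \<in> Zmod (p' * q)" and "x3 \<in> Zmod (p' * q)"
    and "\<exists>y1 y2 y3. set [y1, y2, y3] \<subseteq> Zmod (p' * q) \<and>
           equiv_wrt (p' * q) (Lset (p' * q) p') [x1, x2, x3] [y1, y2, y3] \<and>
           ((q dvd y1 \<and> \<not> q dvd y2 \<and> \<not> q dvd y3 \<and> y1 \<noteq> 0 \<and>
               extremal q (Qsq q) [y2 mod q, y3 mod q])
            \<or> (coprime y1 p' \<and> \<not> coprime y2 p' \<and> \<not> coprime y3 p' \<and>
               extremal q (Qsq q) [y2 mod q, y3 mod q]))"
  shows "extremal (p' * q) (Lset (p' * q) p') [x1, x2, x3]"
proof -
  \<comment> \<open>of the bounds \<open>p', q \<ge> 7\<close> only \<open>p', q > 2\<close> is used\<close>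
  interpret odd_prime_pair p' q
    using assms(1-5) by unfold_locales auto
  obtain y1 y2 y3 where Y: "set [y1, y2, y3] \<subseteq> Zmod (p' * q)"
    "equiv_wrt (p' * q) A [x1, x2, x3] [y1, y2, y3]"
    and ext: "extremal q (Qsq q) [y2 mod q, y3 mod q]"
    and cases: "(q dvd y1 \<and> y1 \<noteq> 0) \<or> (coprime y1 p' \<and> \<not> coprime y2 p' \<and> \<not> coprime y3 p')"
    using assms(9) by blast
  have "2 = Davenport q (Qsq q) - 1"
    using ext by (simp add: extremal_def)
  then have D3: "Davenport q (Qsq q) = 3"
    by arith
  have "\<not> has_wzs_subseq (p' * q) A [y1, y2, y3]"
    using Y(1) cases ext
    by (intro not_has_wzs_subseq_Lset_triple)
      (auto simp: extremal_def coprime_prime_right_iff[OF prime_p])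
  then have no_x: "\<not> has_wzs_subseq (p' * q) A [x1, x2, x3]"
    using has_wzs_subseq_equiv_wrt[OF Y(2)] Lset_mult Lset_inverse by blast
  have "Davenport (p' * q) A = 4"
    using Davenport_eqI[of 3 "p' * q" A "[x1, x2, x3]"] has_wzs_subseq_Lset_of_length_4[OF D3]
      no_x assms(6-8) by simp
  then show ?thesis
    using no_x assms(6-8) by (simp add: extremal_def)
qed

end
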